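(* For $1\le k\le n-1$, $\ell(w_k)=2k$, and for $1\le j,k\le n-1$ with $j\ne k$, $\ell(w_j\cdot w_k)=\ell(w_j)+\ell(w_k)=2(j+k)$.
   Context: $D_n$ ($n\ge2$) is the Coxeter group with generators $s_{1'},s_1,\dots,s_{n-1}$ and relations $s^2=1$, $(s_i s_{i+1})^3=1$, $(s_is_j)^2=1$ for $|i-j|\ge 2$, $(s_{1'}s_2)^3=1$, $(s_{1'}s_i)^2=1$ for $i\ne 2$. $\ell$ denotes Coxeter length with respect to $\{s_{1'},s_1,\dots,s_{n-1}\}$. $w_k=s_k s_{k-1}\cdots s_2 s_1 s_{1'} s_2\cdots s_k$. *)

theory Defs
  imports Main
begin

text \<open>Generators are encoded as
  natural numbers: 0 stands for s_{1'} and i (1 \<le> i \<le> n-1) stands for s_i.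
  Group elements are represented by words (lists of generators) modulo the
  congruence generated by the Coxeter relations.\<close>

definition gens :: "nat \<Rightarrow> nat set" where
  "gens n = {0..<n}"

text \<open>The relators r (meaning r = 1): s^2, (s_i s_{i+1})^3, (s_i s_j)^2 for |i-j| \<ge> 2,
  (s_{1'} s_2)^3, (s_{1'} s_i)^2 for i \<noteq> 2.\<close>
definition relators :: "nat \<Rightarrow> nat list set" where
  "relators n =
     {[s, s] | s. s \<in> gens n}
   \<union> {concat (replicate 3 [i, i + 1]) | i. 1 \<le> i \<and> i + 1 \<le> n - 1}
   \<union> {concat (replicate 2 [i, j]) | i j. 1 \<le> i \<and> i \<le> n - 1 \<and> 1 \<le> j \<and> j \<le> n - 1
                                         \<and> (i + 2 \<le> j \<or> j + 2 \<le> i)}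
   \<union> {concat (replicate 3 [0, 2]) | x::unit. 2 \<le> n - 1}
   \<union> {concat (replicate 2 [0, i]) | i. 1 \<le> i \<and> i \<le> n - 1 \<and> i \<noteq> 2}"

inductive cox_eq :: "nat \<Rightarrow> nat list \<Rightarrow> nat list \<Rightarrow> bool" for n where
  refl: "cox_eq n u u"
| sym: "cox_eq n u v \<Longrightarrow> cox_eq n v u"
| trans: "cox_eq n u v \<Longrightarrow> cox_eq n v w \<Longrightarrow> cox_eq n u w"
| rel: "r \<in> relators n \<Longrightarrow> cox_eq n (u @ r @ v) (u @ v)"

definition cox_len :: "nat \<Rightarrow> nat list \<Rightarrow> nat" where
  "cox_len n w = (LEAST m. \<exists>w'. set w' \<subseteq> gens n \<and> cox_eq n w w' \<and> length w' = m)"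

definition wk :: "nat \<Rightarrow> nat list" where
  "wk k = rev [2..<Suc k] @ [1, 0] @ [2..<Suc k]"

end

theory Submission
  imports Defs
begin

text \<open>D_n acts on \<open>{-n..n} - {0}\<close> by signed permutations: \<open>s\<^sub>1'\<close> swaps 1 with -2
  and 2 with -1, \<open>s\<^sub>i\<close> swaps i with i+1 and -i with -i-1. Call a pair \<open>x < y\<close> with
  \<open>x \<noteq> -y\<close> an inversion of f if \<open>f y < f x\<close>. Composing with a generator creates at most
  two new inversions, so half the number of inversions of the permutation represented by a
  word bounds its Coxeter length from below.
  Both \<open>w\<^sub>k\<close> and \<open>w\<^sub>j w\<^sub>k\<close> act by negating two values a \<noteq> b (namely 1, k+1 and
  j+1, k+1), and such a negation has at least \<open>4 (a + b - 2)\<close> inversions: twice the length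
  of the word, which is therefore reduced.\<close>

definition gen_perm :: "nat \<Rightarrow> int \<Rightarrow> int" where
  "gen_perm s x =
    (if s = 0 then
       (if x = 1 then -2 else if x = -2 then 1 else if x = 2 then -1 else if x = -1 then 2 else x)
     else
       (if x = int s then int s + 1 else if x = int s + 1 then int s
        else if x = - int s then - int s - 1 else if x = - int s - 1 then - int s else x))"

fun word_perm :: "nat list \<Rightarrow> int \<Rightarrow> int" where
  "word_perm [] = id"
| "word_perm (s # w) = gen_perm s \<circ> word_perm w"

lemma word_perm_append: "word_perm (u @ v) = word_perm u \<circ> word_perm v"
  by (induction u) auto

lemma gen_perm_involution: "gen_perm s (gen_perm s x) = x"
  by (simp add: gen_perm_def)

lemma word_perm_concat_replicate: "word_perm (concat (replicate m u)) = word_perm u ^^ m"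
  by (induction m) (simp_all add: word_perm_append)

lemma gen_perm_braid:
  "1 \<le> i \<Longrightarrow>
   gen_perm i (gen_perm (i + 1) (gen_perm i x)) = gen_perm (i + 1) (gen_perm i (gen_perm (i + 1) x))"
  "gen_perm 0 (gen_perm 2 (gen_perm 0 x)) = gen_perm 2 (gen_perm 0 (gen_perm 2 x))"
  by (auto simp: gen_perm_def)

lemma gen_perm_commute:
  "1 \<le> i \<Longrightarrow> i + 2 \<le> j \<Longrightarrow> gen_perm i (gen_perm j x) = gen_perm j (gen_perm i x)"
  "1 \<le> i \<Longrightarrow> i \<noteq> 2 \<Longrightarrow> gen_perm 0 (gen_perm i x) = gen_perm i (gen_perm 0 x)"
  by (auto simp: gen_perm_def)

lemma order_3_if_braid:
  assumes "\<And>x. f (g (f x)) = g (f (g x))" "\<And>x. f (f x) = x" "\<And>x. g (g x) = x"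
  shows "(f \<circ> g) ^^ 3 = id"
proof
  fix x
  show "((f \<circ> g) ^^ 3) x = id x"
    using assms(1)[of "g x"] by (simp add: numeral_3_eq_3 assms(2,3))
qed

lemma order_2_if_commute:
  assumes "\<And>x. f (g x) = g (f x)" "\<And>x. f (f x) = x" "\<And>x. g (g x) = x"
  shows "(f \<circ> g) ^^ 2 = id"
  by (simp add: fun_eq_iff numeral_2_eq_2 assms)

lemma gen_perm_order_3:
  "1 \<le> i \<Longrightarrow> (gen_perm i \<circ> gen_perm (Suc i)) ^^ 3 = id"
  "(gen_perm 0 \<circ> gen_perm 2) ^^ 3 = id"
  using gen_perm_braid by (auto intro!: order_3_if_braid simp: gen_perm_involution)

lemma gen_perm_order_2:
  "1 \<le> i \<Longrightarrow> 1 \<le> j \<Longrightarrow> i + 2 \<le> j \<or> j + 2 \<le> i \<Longrightarrow> (gen_perm i \<circ> gen_perm j) ^^ 2 = id"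
  "1 \<le> i \<Longrightarrow> i \<noteq> 2 \<Longrightarrow> (gen_perm 0 \<circ> gen_perm i) ^^ 2 = id"
  using gen_perm_commute
  by (auto intro!: order_2_if_commute simp: gen_perm_involution)

lemma word_perm_relator: "r \<in> relators n \<Longrightarrow> word_perm r = id"
  unfolding relators_def
  by (auto simp: word_perm_concat_replicate gen_perm_order_3 gen_perm_order_2 fun_eq_iff
      gen_perm_involution)

lemma cox_eq_word_perm: "cox_eq n u v \<Longrightarrow> word_perm u = word_perm v"
  by (induction rule: cox_eq.induct) (auto simp: word_perm_append word_perm_relator)

lemma word_perm_odd: "word_perm w (- x) = - word_perm w x"
  by (induction w arbitrary: x) (auto simp: gen_perm_def)

lemma word_perm_inj: "inj (word_perm w)"
proof (induction w)
  case (Cons s w)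
  have "inj (gen_perm s)"
    by (metis gen_perm_involution injI)
  with Cons show ?case
    by (metis inj_compose word_perm.simps(2))
qed simp

definition signed_range :: "nat \<Rightarrow> int set" where
  "signed_range n = {- int n..int n} - {0}"

definition signed_inversions :: "nat \<Rightarrow> (int \<Rightarrow> int) \<Rightarrow> (int \<times> int) set" where
  "signed_inversions n f =
     {(x, y) \<in> signed_range n \<times> signed_range n. x < y \<and> x \<noteq> - y \<and> f y < f x}"

lemma card_signed_range: "card (signed_range n) = 2 * n"
  by (simp add: signed_range_def card_Diff_singleton)

lemma finite_signed_inversions: "finite (signed_inversions n f)"
  by (rule finite_subset[of _ "signed_range n \<times> signed_range n"])
    (auto simp: signed_inversions_def signed_range_def)

definition flipped_pairs :: "nat \<Rightarrow> (int \<times> int) set" where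
  "flipped_pairs s =
     (if s = 0 then {(-2, 1), (-1, 2)} else {(int s, int s + 1), (- int s - 1, - int s)})"

lemma gen_perm_new_inversion:
  "u \<noteq> 0 \<Longrightarrow> v \<noteq> 0 \<Longrightarrow> u < v \<Longrightarrow> u \<noteq> - v \<Longrightarrow> gen_perm s v < gen_perm s u \<Longrightarrow>
   (u, v) \<in> flipped_pairs s"
  by (auto simp: gen_perm_def flipped_pairs_def split: if_splits)

lemma card_signed_inversions_gen_perm:
  assumes inj: "inj f" and odd: "\<And>x. f (- x) = - f x"
  shows "card (signed_inversions n (gen_perm s \<circ> f)) \<le> card (signed_inversions n f) + 2"
proof -
  define new where
    "new = map_prod f f -` flipped_pairs s \<inter> (signed_range n \<times> signed_range n)"
  have "signed_inversions n (gen_perm s \<circ> f) \<subseteq> signed_inversions n f \<union> new"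
  proof
    fix z assume "z \<in> signed_inversions n (gen_perm s \<circ> f)"
    then obtain x y where z: "z = (x, y)" and xy: "x \<in> signed_range n" "y \<in> signed_range n"
      "x < y" "x \<noteq> - y" "gen_perm s (f y) < gen_perm s (f x)"
      by (auto simp: signed_inversions_def)
    show "z \<in> signed_inversions n f \<union> new"
    proof (cases "f y < f x")
      case True
      then show ?thesis
        using z xy by (simp add: signed_inversions_def)
    next
      case False
      have "f 0 = 0"
        using odd[of 0] by simp
      then have "f x \<noteq> 0" "f y \<noteq> 0"
        using xy inj by (metis injD signed_range_def Diff_iff singletonI)+
      moreover have "f x \<noteq> f y" "f x \<noteq> - f y"
        using xy inj by (metis injD less_irrefl odd)+
      ultimately have "(f x, f y) \<in> flipped_pairs s"
        using False xy by (intro gen_perm_new_inversion) auto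
      then show ?thesis
        using z xy by (simp add: new_def)
    qed
  qed
  moreover have "card new \<le> 2"
  proof -
    have "inj (map_prod f f)"
      using map_prod_inj_on[OF inj inj] by simp
    then have "card new \<le> card (flipped_pairs s)"
      unfolding new_def
      by (intro card_vimage_inj_on_le) (auto simp: flipped_pairs_def intro: inj_on_subset)
    also have "\<dots> \<le> 2"
      by (simp add: flipped_pairs_def card_insert_if)
    finally show ?thesis .
  qed
  moreover have "finite new"
    by (rule finite_subset[of _ "signed_range n \<times> signed_range n"])
      (auto simp: new_def signed_range_def)
  ultimately show ?thesis
    using card_mono[of "signed_inversions n f \<union> new"] finite_signed_inversions
      card_Un_le[of "signed_inversions n f" new]
    by (meson add_left_mono finite_UnI le_trans)
qed

lemma card_signed_inversions_word_perm:
  "card (signed_inversions n (word_perm w)) \<le> 2 * length w"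
proof (induction w)
  case Nil
  have "signed_inversions n id = {}"
    by (auto simp: signed_inversions_def)
  then show ?case
    by (metis card.empty le0 word_perm.simps(1))
next
  case (Cons s w)
  have "card (signed_inversions n (word_perm (s # w)))
      \<le> card (signed_inversions n (word_perm w)) + 2"
    using card_signed_inversions_gen_perm[OF word_perm_inj word_perm_odd]
    by (simp only: word_perm.simps)
  with Cons show ?case
    by (simp del: word_perm.simps)
qed

lemma cox_len_le_length: "set w \<subseteq> gens n \<Longrightarrow> cox_len n w \<le> length w"
  unfolding cox_len_def by (rule Least_le) (blast intro: cox_eq.refl)

lemma card_signed_inversions_le_cox_len:
  assumes "set w \<subseteq> gens n"
  shows "card (signed_inversions n (word_perm w)) \<le> 2 * cox_len n w"
proof -
  have ex: "\<exists>m w'. set w' \<subseteq> gens n \<and> cox_eq n w w' \<and> length w' = m"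
    using assms by (blast intro: cox_eq.refl)
  obtain w' where "cox_eq n w w'" "length w' = cox_len n w"
    using LeastI_ex[OF ex] unfolding cox_len_def by blast
  then show ?thesis
    using card_signed_inversions_word_perm[of n w'] cox_eq_word_perm by metis
qed

definition negate_pair :: "nat \<Rightarrow> nat \<Rightarrow> int \<Rightarrow> int" where
  "negate_pair a b x = (if \<bar>x\<bar> = int a \<or> \<bar>x\<bar> = int b then - x else x)"

lemma negate_pair_comp:
  "a \<noteq> b \<Longrightarrow> a \<noteq> c \<Longrightarrow> b \<noteq> c \<Longrightarrow> negate_pair a b \<circ> negate_pair a c = negate_pair b c"
  by (auto simp: fun_eq_iff negate_pair_def)

lemma card_signed_inversions_negate_pair:
  assumes "1 \<le> a" "1 \<le> b" "a \<noteq> b" "a \<le> n" "b \<le> n"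
  shows "4 * (a + b - 2) \<le> card (signed_inversions n (negate_pair a b))"
proof -
  define inversions_at where "inversions_at c =
    (\<lambda>x. (x, int c)) ` signed_range (c - 1) \<union> (\<lambda>y. (- int c, y)) ` signed_range (c - 1)" for c
  have card_inversions_at: "card (inversions_at c) = 4 * (c - 1)" if "1 \<le> c" for c
  proof -
    have "card ((\<lambda>x. (x, int c)) ` signed_range (c - 1)) = 2 * (c - 1)"
      "card ((\<lambda>y. (- int c, y)) ` signed_range (c - 1)) = 2 * (c - 1)"
      by (simp_all add: card_image inj_on_def card_signed_range)
    moreover have
      "(\<lambda>x. (x, int c)) ` signed_range (c - 1) \<inter> (\<lambda>y. (- int c, y)) ` signed_range (c - 1) = {}"
      using that by (auto simp: signed_range_def)
    ultimately show ?thesis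
      unfolding inversions_at_def by (simp add: card_Un_disjoint signed_range_def)
  qed
  have "inversions_at a \<inter> inversions_at b = {}"
    using assms by (auto simp: inversions_at_def signed_range_def)
  then have "card (inversions_at a \<union> inversions_at b) = 4 * (a + b - 2)"
    using assms card_inversions_at by (simp add: card_Un_disjoint inversions_at_def signed_range_def)
  moreover have "inversions_at a \<union> inversions_at b \<subseteq> signed_inversions n (negate_pair a b)"
    using assms by (auto simp: inversions_at_def signed_inversions_def signed_range_def negate_pair_def)
  ultimately show ?thesis
    by (metis card_mono finite_signed_inversions)
qed

lemma cox_len_eq_length_if_negate_pair:
  assumes "set w \<subseteq> gens n" "word_perm w = negate_pair a b"
    and "1 \<le> a" "1 \<le> b" "a \<noteq> b" "a \<le> n" "b \<le> n" "length w \<le> 2 * (a + b - 2)"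
  shows "cox_len n w = length w"
proof -
  have "4 * (a + b - 2) \<le> 2 * cox_len n w"
    using card_signed_inversions_negate_pair[of a b n] card_signed_inversions_le_cox_len[of w n]
      assms by simp
  then show ?thesis
    using cox_len_le_length[OF assms(1)] assms(8) by linarith
qed

lemma gen_perm_conj_negate_pair:
  "0 < s \<Longrightarrow> a \<noteq> s \<Longrightarrow> a \<noteq> Suc s \<Longrightarrow>
   gen_perm s \<circ> negate_pair a s \<circ> gen_perm s = negate_pair a (Suc s)"
  by (auto simp: fun_eq_iff gen_perm_def negate_pair_def)

lemma word_perm_wk: "1 \<le> k \<Longrightarrow> word_perm (wk k) = negate_pair 1 (Suc k)"
proof (induction k rule: nat_induct_at_least)
  case base
  show ?case
    by (auto simp: wk_def fun_eq_iff gen_perm_def negate_pair_def)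
next
  case (Suc k)
  have "wk (Suc k) = Suc k # wk k @ [Suc k]"
    using Suc.hyps by (simp add: wk_def)
  then have "word_perm (wk (Suc k))
      = gen_perm (Suc k) \<circ> negate_pair 1 (Suc k) \<circ> gen_perm (Suc k)"
    using Suc.IH by (simp add: word_perm_append o_assoc)
  also have "\<dots> = negate_pair 1 (Suc (Suc k))"
    using Suc.hyps by (intro gen_perm_conj_negate_pair) auto
  finally show ?case .
qed

lemma length_wk: "1 \<le> k \<Longrightarrow> length (wk k) = 2 * k"
  by (simp add: wk_def; arith)

lemma set_wk: "1 \<le> k \<Longrightarrow> k < n \<Longrightarrow> set (wk k) \<subseteq> gens n"
  by (auto simp: wk_def gens_def)

lemma cox_len_wk:
  assumes "1 \<le> k" "k < n"
  shows "cox_len n (wk k) = 2 * k"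
  using cox_len_eq_length_if_negate_pair[of "wk k" n 1 "Suc k"] assms
  by (simp add: set_wk word_perm_wk length_wk)

lemma cox_len_wk_append_wk:
  assumes "1 \<le> j" "j < n" "1 \<le> k" "k < n" "j \<noteq> k"
  shows "cox_len n (wk j @ wk k) = 2 * (j + k)"
proof -
  have "word_perm (wk j @ wk k) = negate_pair (Suc j) (Suc k)"
    using assms by (simp add: word_perm_append word_perm_wk negate_pair_comp)
  moreover have "set (wk j @ wk k) \<subseteq> gens n"
    using assms set_wk by auto
  ultimately show ?thesis
    using cox_len_eq_length_if_negate_pair[of "wk j @ wk k" n "Suc j" "Suc k"] assms
    by (simp add: length_wk)
qed

theorem mainTheorem11:
  fixes n :: nat
  assumes "n \<ge> 2"
  shows "(\<forall>k. 1 \<le> k \<and> k \<le> n - 1 \<longrightarrow> cox_len n (wk k) = 2 * k)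
       \<and> (\<forall>j k. 1 \<le> j \<and> j \<le> n - 1 \<and> 1 \<le> k \<and> k \<le> n - 1 \<and> j \<noteq> k \<longrightarrow>
            cox_len n (wk j @ wk k) = cox_len n (wk j) + cox_len n (wk k)
          \<and> cox_len n (wk j) + cox_len n (wk k) = 2 * (j + k))"
  by (auto simp: cox_len_wk cox_len_wk_append_wk)

end
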